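(* Let $\mathcal{V}^{WF}$ be the set of well-formed views. The relation $\prec$ on views, restricted to $\mathcal{V}^{WF}$, is a causality relation, i.e. a strict partial order: (i) for all $v_1,v_2,v_3\in\mathcal{V}^{WF}$, if $v_1\prec v_2$ and $v_2\prec v_3$ then $v_1\prec v_3$; (ii) for all $v\in\mathcal{V}^{WF}$, $\neg(v\prec v)$; (iii) for all $v_1,v_2\in\mathcal{V}^{WF}$, if $v_1\prec v_2$ then $\neg(v_2\prec v_1)$.
   Context: A view is a record $v=(\mathrm{sp}(v),\mathrm{wp}(v),\mathrm{mode}(v))$ with $\mathrm{sp}(v),\mathrm{wp}(v)\in\mathbb{N}$ (the signal phase and wait phase) and $\mathrm{mode}(v)\in\{\mathtt{SW},\mathtt{SO},\mathtt{WO}\}$ (signal-wait, signal-only, wait-only). Write $\mathrm{CanSignal}(v)$ iff $\mathrm{mode}(v)\in\{\mathtt{SW},\mathtt{SO}\}$ and $\mathrm{CanWait}(v)$ iff $\mathrm{mode}(v)\in\{\mathtt{SW},\mathtt{WO}\}$. A view $v$ is well-formed if one of the following holds: (a) $\mathrm{CanWait}(v)$ and $\mathrm{wp}(v)=\mathrm{sp}(v)$; (b) $\mathrm{CanWait}(v)$ and $\mathrm{wp}(v)+1=\mathrm{sp}(v)$; (c) $\mathrm{mode}(v)=\mathtt{SO}$ and $\mathrm{wp}(v)\le\mathrm{sp}(v)$. The happens-before relation on views is defined by $v_1\prec v_2$ iff $\mathrm{CanSignal}(v_1)$, $\mathrm{sp}(v_1)<\mathrm{wp}(v_2)$, and $\mathrm{CanWait}(v_2)$.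 *)

theory Defs
  imports Main
begin

datatype mode = SW | SO | WO

record view =
  sp :: nat
  wp :: nat
  vmode :: mode

definition CanSignal :: "view \<Rightarrow> bool" where
  "CanSignal v \<longleftrightarrow> vmode v \<in> {SW, SO}"

definition CanWait :: "view \<Rightarrow> bool" where
  "CanWait v \<longleftrightarrow> vmode v \<in> {SW, WO}"

definition well_formed :: "view \<Rightarrow> bool" where
  "well_formed v \<longleftrightarrow>
     (CanWait v \<and> wp v = sp v) \<or>
     (CanWait v \<and> wp v + 1 = sp v) \<or>
     (vmode v = SO \<and> wp v \<le> sp v)"

definition WF_views :: "view set" where
  "WF_views = {v. well_formed v}"

definition hb :: "view \<Rightarrow> view \<Rightarrow> bool" (infix "\<prec>" 50) where
  "v1 \<prec> v2 \<longleftrightarrow> CanSignal v1 \<and> sp v1 < wp v2 \<and> CanWait v2"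

end

theory Submission
  imports Defs
begin

(* A well-formed view never waits beyond its own signal phase, so along v1 \<prec> v2 the signal
   phase strictly increases; the order properties are then inherited from < on nat. *)

lemma well_formed_wp_le_sp:
  assumes "well_formed v"
  shows "wp v \<le> sp v"
  using assms unfolding well_formed_def by auto

lemma hb_sp_less:
  assumes "v1 \<prec> v2" and "well_formed v2"
  shows "sp v1 < sp v2"
  using assms well_formed_wp_le_sp[of v2] unfolding hb_def by simp

lemma hb_trans:
  assumes "v1 \<prec> v2" and "v2 \<prec> v3" and "well_formed v2"
  shows "v1 \<prec> v3"
proof -
  have "sp v1 < sp v2" using assms(1,3) by (rule hb_sp_less)
  also have "sp v2 < wp v3" using assms(2) unfolding hb_def by simp
  finally show ?thesis using assms(1,2) unfolding hb_def by simp
qed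

lemma hb_irrefl:
  assumes "well_formed v"
  shows "\<not> v \<prec> v"
  using hb_sp_less[of v v] assms by blast

theorem lemma1:
  shows "(\<forall>v1\<in>WF_views. \<forall>v2\<in>WF_views. \<forall>v3\<in>WF_views.
            v1 \<prec> v2 \<and> v2 \<prec> v3 \<longrightarrow> v1 \<prec> v3)
       \<and> (\<forall>v\<in>WF_views. \<not> (v \<prec> v))
       \<and> (\<forall>v1\<in>WF_views. \<forall>v2\<in>WF_views. v1 \<prec> v2 \<longrightarrow> \<not> (v2 \<prec> v1))"
  unfolding WF_views_def
  using hb_trans hb_irrefl by blast

end
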